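(* Let $G_{\mathit{di}}$ be a knowledge connectivity graph that is Byzantine-safe for $F$ and whose sink component (vertex set $V_{\mathit{sink}}$) contains at least $2f+1$ correct processes. Then participant detectors, the threshold $f$, and the sink detector are sufficient to solve consensus in Stellar: when every process defines its slices by the slice construction below (using $\mathit{PD}_i$, $f$, and the sink detector), the set $W$ of all correct processes forms a consensus cluster, and hence is the (unique) maximal consensus cluster.
   Context: Processes and faults: $\Pi$ is a finite set of processes, $f\ge0$ a known integer; $W\subseteq\Pi$ is the set of correct processes and $F=\Pi\setminus W$ the Byzantine faulty processes, $|F|\le f$. Faulty processes may declare arbitrary slices. Slices and quorums: each process $i$ has a set $\mathcal{S}_i$ of slices (subsets of $\Pi$). $Q\subseteq\Pi$ is a quorum if every $i\in Q$ has some $S\in\mathcal{S}_i$ with $S\subseteq Q$; a quorum of $i$ is a quorum containing $i$. A set $I\subseteq W$ is intertwined if $|Q\cap Q'|>f$ for all $i,j\in I$, every quorum $Q$ of $i$ and every quorum $Q'$ of $j$. A set $I\subseteq W$ is a consensus cluster if (Quorum Intersection) $I$ is intertwined and (Quorum Availability) every $i\in I$ has a quorum $Q$ with $Q\subseteq I$. A maximal consensus cluster is a consensus cluster not strictly contained in another consensus cluster. (Known criterion, from prior work: all correct processes can solve consensus with the Stellar consensus protocol under partial synchrony if there is exactly one maximal consensus cluster and it equals $W$.) Knowledge graph: each process $i$ is given $\mathit{PD}_i\subseteq\Pi$; $G_{\mathit{di}}$ is the directed graph on $\Pi$ with edge $(i,j)$ iff $j\in\mathit{PD}_i$. A sink component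 is a strongly connected component of $G_{\mathit{di}}$ from which no path leads outside it. A directed graph is $k$-OSR if (1) its underlying undirected graph is connected; (2) its condensation into strongly connected components has exactly one sink $G_{\mathit{sink}}$; (3) $G_{\mathit{sink}}$ is $k$-strongly connected (every ordered pair of its nodes joined by $k$ node-disjoint directed paths); (4) from every node outside $G_{\mathit{sink}}$ to every node in it there are at least $k$ node-disjoint directed paths. $G_{\mathit{di}}$ is Byzantine-safe for $F$ if $|F|\le f$ and the graph obtained from $G_{\mathit{di}}$ by deleting $F$ is $(f+1)$-OSR. $V_{\mathit{sink}}$ denotes the vertex set of the unique sink component of $G_{\mathit{di}}$. Sink detector: an oracle with operation $\mathtt{get\_sink}(\mathit{PD}_i,f)$ returning $\langle \mathit{true},V_{\mathit{sink}}\rangle$ to $i\in V_{\mathit{sink}}$ and $\langle\mathit{false},V_i\rangle$ to $i\notin V_{\mathit{sink}}$, where $V_i\subseteq V_{\mathit{sink}}$ contains at least $f+1$ correct members of $V_{\mathit{sink}}$. Slice construction: let $m=\lceil (|V_{\mathit{sink}}|+f+1)/2\rceil$. Every correct $i\in V_{\mathit{sink}}$ has $\mathcal{S}_i=\{S\subseteq V_{\mathit{sink}}: |S|=m\}$; every correct $i\notin V_{\mathit{sink}}$ has $\mathcal{S}_i=\{S\subseteq V_i: |S|=f+1\}$. *)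

theory Defs
  imports Complex_Main
begin

text \<open>Sl i is the set of slices declared by process i.\<close>

definition is_quorum :: "'p set \<Rightarrow> ('p \<Rightarrow> 'p set set) \<Rightarrow> 'p set \<Rightarrow> bool" where
  "is_quorum Pi Sl Q \<longleftrightarrow> Q \<subseteq> Pi \<and> (\<forall>i\<in>Q. \<exists>S\<in>Sl i. S \<subseteq> Q)"

definition intertwined :: "'p set \<Rightarrow> ('p \<Rightarrow> 'p set set) \<Rightarrow> 'p set \<Rightarrow> nat \<Rightarrow> 'p set \<Rightarrow> bool" where
  "intertwined Pi Sl W f I \<longleftrightarrow> I \<subseteq> W \<and>
     (\<forall>i\<in>I. \<forall>j\<in>I. \<forall>Q Q'. is_quorum Pi Sl Q \<and> i \<in> Q \<and> is_quorum Pi Sl Q' \<and> j \<in> Q'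
        \<longrightarrow> card (Q \<inter> Q') > f)"

definition consensus_cluster :: "'p set \<Rightarrow> ('p \<Rightarrow> 'p set set) \<Rightarrow> 'p set \<Rightarrow> nat \<Rightarrow> 'p set \<Rightarrow> bool" where
  "consensus_cluster Pi Sl W f I \<longleftrightarrow> intertwined Pi Sl W f I \<and>
     (\<forall>i\<in>I. \<exists>Q. is_quorum Pi Sl Q \<and> i \<in> Q \<and> Q \<subseteq> I)"

definition maximal_consensus_cluster :: "'p set \<Rightarrow> ('p \<Rightarrow> 'p set set) \<Rightarrow> 'p set \<Rightarrow> nat \<Rightarrow> 'p set \<Rightarrow> bool" where
  "maximal_consensus_cluster Pi Sl W f I \<longleftrightarrow> consensus_cluster Pi Sl W f I \<and>
     (\<forall>J. consensus_cluster Pi Sl W f J \<and> I \<subseteq> J \<longrightarrow> J = I)"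

definition reach :: "'p set \<Rightarrow> ('p \<times> 'p) set \<Rightarrow> ('p \<times> 'p) set" where
  "reach V E = (E \<inter> (V \<times> V))\<^sup>*"

definition strongly_connected_component :: "'p set \<Rightarrow> ('p \<times> 'p) set \<Rightarrow> 'p set \<Rightarrow> bool" where
  "strongly_connected_component V E C \<longleftrightarrow> C \<noteq> {} \<and> C \<subseteq> V \<and>
     (\<forall>x\<in>C. \<forall>y\<in>C. (x, y) \<in> reach V E) \<and>
     (\<forall>x\<in>C. \<forall>y\<in>V. (x, y) \<in> reach V E \<and> (y, x) \<in> reach V E \<longrightarrow> y \<in> C)"

definition sink_component :: "'p set \<Rightarrow> ('p \<times> 'p) set \<Rightarrow> 'p set \<Rightarrow> bool" where
  "sink_component V E C \<longleftrightarrow> strongly_connected_component V E C \<and>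
     (\<forall>x\<in>C. \<forall>y\<in>V. (x, y) \<in> reach V E \<longrightarrow> y \<in> C)"

definition weakly_connected :: "'p set \<Rightarrow> ('p \<times> 'p) set \<Rightarrow> bool" where
  "weakly_connected V E \<longleftrightarrow>
     (\<forall>x\<in>V. \<forall>y\<in>V. (x, y) \<in> ((E \<union> E\<inverse>) \<inter> (V \<times> V))\<^sup>*)"

definition dpath :: "'p set \<Rightarrow> ('p \<times> 'p) set \<Rightarrow> 'p \<Rightarrow> 'p \<Rightarrow> 'p list \<Rightarrow> bool" where
  "dpath V E u v p \<longleftrightarrow> p \<noteq> [] \<and> hd p = u \<and> last p = v \<and> set p \<subseteq> V \<and> distinct p \<and>
     (\<forall>k. Suc k < length p \<longrightarrow> (p ! k, p ! Suc k) \<in> E)"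

definition inner_vertices :: "'p list \<Rightarrow> 'p set" where
  "inner_vertices p = set (butlast (tl p))"

definition k_disjoint_paths :: "'p set \<Rightarrow> ('p \<times> 'p) set \<Rightarrow> nat \<Rightarrow> 'p \<Rightarrow> 'p \<Rightarrow> bool" where
  "k_disjoint_paths V E k u v \<longleftrightarrow> (\<exists>P. finite P \<and> card P \<ge> k \<and> (\<forall>p\<in>P. dpath V E u v p) \<and>
     (\<forall>p\<in>P. \<forall>q\<in>P. p \<noteq> q \<longrightarrow> inner_vertices p \<inter> inner_vertices q = {}))"

definition k_strongly_connected :: "'p set \<Rightarrow> ('p \<times> 'p) set \<Rightarrow> nat \<Rightarrow> bool" where
  "k_strongly_connected V E k \<longleftrightarrow> (\<forall>u\<in>V. \<forall>v\<in>V. u \<noteq> v \<longrightarrow> k_disjoint_paths V E k u v)"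

definition k_OSR :: "'p set \<Rightarrow> ('p \<times> 'p) set \<Rightarrow> nat \<Rightarrow> bool" where
  "k_OSR V E k \<longleftrightarrow> weakly_connected V E \<and>
     (\<exists>C. sink_component V E C \<and> (\<forall>C'. sink_component V E C' \<longrightarrow> C' = C) \<and>
          k_strongly_connected C E k \<and>
          (\<forall>u\<in>V - C. \<forall>v\<in>C. k_disjoint_paths V E k u v))"

definition kgraph_edges :: "'p set \<Rightarrow> ('p \<Rightarrow> 'p set) \<Rightarrow> ('p \<times> 'p) set" where
  "kgraph_edges Pi PD = {(i, j). i \<in> Pi \<and> j \<in> Pi \<and> j \<in> PD i}"

definition byzantine_safe :: "'p set \<Rightarrow> ('p \<Rightarrow> 'p set) \<Rightarrow> nat \<Rightarrow> 'p set \<Rightarrow> bool" where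
  "byzantine_safe Pi PD f F \<longleftrightarrow> card F \<le> f \<and>
     k_OSR (Pi - F) (kgraph_edges Pi PD \<inter> ((Pi - F) \<times> (Pi - F))) (f + 1)"

text \<open>sd i is the output of get_sink(PD_i, f) at process i.\<close>
definition sink_detector_spec :: "'p set \<Rightarrow> nat \<Rightarrow> 'p set \<Rightarrow> ('p \<Rightarrow> bool \<times> 'p set) \<Rightarrow> bool" where
  "sink_detector_spec W f Vsink sd \<longleftrightarrow>
     (\<forall>i\<in>W. (i \<in> Vsink \<longrightarrow> sd i = (True, Vsink)) \<and>
            (i \<notin> Vsink \<longrightarrow> fst (sd i) = False \<and> snd (sd i) \<subseteq> Vsink \<and>
                              card (snd (sd i) \<inter> Vsink \<inter> W) \<ge> f + 1))"

definition slice_threshold :: "'p set \<Rightarrow> nat \<Rightarrow> nat" where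
  "slice_threshold Vsink f = nat \<lceil>real (card Vsink + f + 1) / 2\<rceil>"

definition constructed_slices :: "nat \<Rightarrow> 'p set \<Rightarrow> bool \<times> 'p set \<Rightarrow> 'p set set" where
  "constructed_slices f Vsink r =
     (if fst r then {S. S \<subseteq> Vsink \<and> card S = slice_threshold Vsink f}
      else {S. S \<subseteq> snd r \<and> card S = f + 1})"

end

theory Submission
  imports Defs
begin

text \<open>Any two slices of size m = \<lceil>(|Vsink| + f + 1)/2\<rceil> inside Vsink overlap in
  more than f processes. A quorum of a correct process inside the sink contains such a slice
  directly; a quorum of a correct process outside the sink contains f + 1 sink members, one of
  which is correct and so brings its own sink slice into the quorum. Hence any two quorums
  of correct processes intersect in more than f processes. For availability, the 2f + 1 correct
  sink members are enough to pick every correct process a slice of correct processes, so W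
  itself is a quorum.\<close>

lemma slice_threshold_eq: "slice_threshold V f = (card V + f + 2) div 2"
proof -
  have "\<lceil>real (card V + f + 1) / 2\<rceil> = int ((card V + f + 2) div 2)"
    by (rule ceiling_unique) (simp_all add: field_simps)
  then show ?thesis
    unfolding slice_threshold_def by simp
qed

lemma card_add_slice_threshold_less: "card V + f < 2 * slice_threshold V f"
  unfolding slice_threshold_eq by linarith

lemma card_Int_greater:
  assumes "finite V" "S \<subseteq> V" "T \<subseteq> V" "card V + f < card S + card T"
  shows "f < card (S \<inter> T)"
proof -
  have "finite S" "finite T"
    using assms(1-3) finite_subset by auto
  then have "card (S \<union> T) + card (S \<inter> T) = card S + card T"
    by (rule card_Un_Int[symmetric])
  moreover have "card (S \<union> T) \<le> card V"
    using assms(1-3) by (intro card_mono) auto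
  ultimately show ?thesis
    using assms(4) by linarith
qed

lemma maximal_consensus_cluster_iff_eq:
  assumes "consensus_cluster Pi Sl W f W"
  shows "maximal_consensus_cluster Pi Sl W f I \<longleftrightarrow> I = W"
proof -
  have "I \<subseteq> W" if "consensus_cluster Pi Sl W f I" for I
    using that unfolding consensus_cluster_def intertwined_def by blast
  then show ?thesis
    using assms unfolding maximal_consensus_cluster_def by blast
qed

text \<open>The graph hypotheses of the theorem (Byzantine safety, uniqueness of the sink) serve only
  to make the sink detector implementable; the cluster argument needs just Vsink \<subseteq> \<Pi>.\<close>

locale sink_slice_construction =
  fixes Pi W :: "'p set" and f :: nat and Vsink :: "'p set"
    and sd :: "'p \<Rightarrow> bool \<times> 'p set" and Sl :: "'p \<Rightarrow> 'p set set"
  assumes finite_Pi: "finite Pi"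
    and correct_subset: "W \<subseteq> Pi"
    and few_faulty: "card (Pi - W) \<le> f"
    and sink_subset: "Vsink \<subseteq> Pi"
    and many_correct_in_sink: "2 * f + 1 \<le> card (Vsink \<inter> W)"
    and sink_detector: "sink_detector_spec W f Vsink sd"
    and constructed: "\<forall>i\<in>W. Sl i = constructed_slices f Vsink (sd i)"
begin

lemma finite_sink: "finite Vsink"
  using finite_Pi sink_subset finite_subset by blast

lemma slices_in_sink:
  assumes "i \<in> W" "i \<in> Vsink"
  shows "Sl i = {S. S \<subseteq> Vsink \<and> card S = slice_threshold Vsink f}"
  using assms sink_detector constructed
  unfolding sink_detector_spec_def constructed_slices_def by auto

lemma slices_outside_sink:
  assumes "i \<in> W" "i \<notin> Vsink"
  shows "Sl i = {S. S \<subseteq> snd (sd i) \<and> card S = f + 1}"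
    and "snd (sd i) \<subseteq> Vsink"
    and "f + 1 \<le> card (snd (sd i) \<inter> Vsink \<inter> W)"
  using assms sink_detector constructed
  unfolding sink_detector_spec_def constructed_slices_def by auto

lemma slice_threshold_le_correct_sink: "slice_threshold Vsink f \<le> card (Vsink \<inter> W)"
proof -
  have "card Vsink = card (Vsink \<inter> W) + card (Vsink - W)"
    using finite_sink by (rule card_Int_Diff)
  moreover have "card (Vsink - W) \<le> card (Pi - W)"
    using finite_Pi sink_subset by (intro card_mono) auto
  ultimately show ?thesis
    using few_faulty many_correct_in_sink unfolding slice_threshold_eq by linarith
qed

lemma exists_correct_member:
  assumes "S \<subseteq> Pi" "f < card S"
  obtains k where "k \<in> S" "k \<in> W"
proof -
  have "\<not> S \<subseteq> Pi - W"
    using card_mono[of "Pi - W" S] finite_Pi few_faulty assms(2) by auto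
  with assms(1) that show thesis by blast
qed

lemma quorum_contains_sink_slice:
  assumes "is_quorum Pi Sl Q" "i \<in> Q" "i \<in> W"
  obtains S where "S \<subseteq> Q" "S \<subseteq> Vsink" "card S = slice_threshold Vsink f"
proof -
  have own_slice: "\<exists>S\<in>Sl j. S \<subseteq> Q" if "j \<in> Q" for j
    using assms(1) that unfolding is_quorum_def by blast
  have "\<exists>k\<in>Q. k \<in> W \<and> k \<in> Vsink"
  proof (cases "i \<in> Vsink")
    case False
    then obtain S where S: "S \<in> Sl i" "S \<subseteq> Q"
      using own_slice[OF assms(2)] by blast
    then have "S \<subseteq> Vsink" "card S = f + 1"
      using slices_outside_sink[OF assms(3) False] by auto
    then have "S \<subseteq> Pi" "f < card S"
      using sink_subset by auto
    then obtain k where "k \<in> S" "k \<in> W"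
      by (rule exists_correct_member)
    then show ?thesis
      using S(2) \<open>S \<subseteq> Vsink\<close> by blast
  qed (use assms in blast)
  then obtain k where "k \<in> Q" "k \<in> W" "k \<in> Vsink" by blast
  then obtain S where "S \<in> Sl k" "S \<subseteq> Q"
    using own_slice by blast
  then show thesis
    using that slices_in_sink[OF \<open>k \<in> W\<close> \<open>k \<in> Vsink\<close>] by auto
qed

lemma intertwined_correct: "intertwined Pi Sl W f W"
  unfolding intertwined_def
proof (intro conjI ballI allI impI)
  fix i j Q Q'
  assume "i \<in> W" "j \<in> W" and quorums: "is_quorum Pi Sl Q \<and> i \<in> Q \<and> is_quorum Pi Sl Q' \<and> j \<in> Q'"
  obtain S where S: "S \<subseteq> Q" "S \<subseteq> Vsink" "card S = slice_threshold Vsink f"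
    using quorum_contains_sink_slice quorums \<open>i \<in> W\<close> by blast
  obtain T where T: "T \<subseteq> Q'" "T \<subseteq> Vsink" "card T = slice_threshold Vsink f"
    using quorum_contains_sink_slice quorums \<open>j \<in> W\<close> by blast
  have "f < card (S \<inter> T)"
    using card_Int_greater[OF finite_sink S(2) T(2)] card_add_slice_threshold_less[of Vsink f] S(3) T(3)
    by simp
  also have "\<dots> \<le> card (Q \<inter> Q')"
    using S T quorums finite_Pi unfolding is_quorum_def by (intro card_mono) (auto intro: finite_subset)
  finally show "f < card (Q \<inter> Q')" .
qed simp

lemma correct_is_quorum: "is_quorum Pi Sl W"
  unfolding is_quorum_def
proof (intro conjI ballI)
  fix i
  assume "i \<in> W"
  show "\<exists>S\<in>Sl i. S \<subseteq> W"
  proof (cases "i \<in> Vsink")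
    case True
    obtain S where "S \<subseteq> Vsink \<inter> W" "card S = slice_threshold Vsink f"
      using slice_threshold_le_correct_sink by (meson obtain_subset_with_card_n)
    then show ?thesis
      using slices_in_sink[OF \<open>i \<in> W\<close> True] by auto
  next
    case False
    obtain S where "S \<subseteq> snd (sd i) \<inter> Vsink \<inter> W" "card S = f + 1"
      using slices_outside_sink(3)[OF \<open>i \<in> W\<close> False] by (meson obtain_subset_with_card_n)
    then show ?thesis
      using slices_outside_sink(1)[OF \<open>i \<in> W\<close> False] by auto
  qed
qed (rule correct_subset)

lemma consensus_cluster_correct: "consensus_cluster Pi Sl W f W"
  unfolding consensus_cluster_def using intertwined_correct correct_is_quorum by blast

end

theorem theorem5:
  fixes Pi W :: "'p set" and f :: nat and PD :: "'p \<Rightarrow> 'p set"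
    and Vsink :: "'p set" and sd :: "'p \<Rightarrow> bool \<times> 'p set" and Sl :: "'p \<Rightarrow> 'p set set"
  assumes "finite Pi"
    and "W \<subseteq> Pi"
    and "card (Pi - W) \<le> f"
    and "byzantine_safe Pi PD f (Pi - W)"
    and "sink_component Pi (kgraph_edges Pi PD) Vsink"
    and "\<forall>C. sink_component Pi (kgraph_edges Pi PD) C \<longrightarrow> C = Vsink"
    and "card (Vsink \<inter> W) \<ge> 2 * f + 1"
    and "sink_detector_spec W f Vsink sd"
    and "\<forall>i\<in>W. Sl i = constructed_slices f Vsink (sd i)"
  shows "consensus_cluster Pi Sl W f W \<and>
         (\<forall>I. maximal_consensus_cluster Pi Sl W f I \<longleftrightarrow> I = W)"
proof -
  have "Vsink \<subseteq> Pi"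
    using assms(5) unfolding sink_component_def strongly_connected_component_def by blast
  then interpret sink_slice_construction Pi W f Vsink sd Sl
    using assms(1-3,7-9) by unfold_locales
  show ?thesis
    using consensus_cluster_correct maximal_consensus_cluster_iff_eq by blast
qed

end
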